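(* Let $\Theta_4$ have vertices $v_1,v_2$ and edges $e_1,\dots,e_4$, and let $h_{i,j}$ be the half-edge incident on $v_i$ and $e_j$. Define \[A_2=\sum_{\sigma\in\Sigma_4}\mathrm{sgn}(\sigma)(e_1-e_{\sigma(3)})(h_{1,\sigma(1)}-h_{1,1})(h_{2,\sigma(2)}-h_{2,1})\] in the reduced Świątkowski complex of $\Theta_4$ (degree $2$, weight $3$). Then $A_2$ is a cycle, and its class $[A_2]$ generates $H_2(B_3(\Theta_4))$.
   Context: $\Theta_4$ is the graph with two vertices and four edges joining them. The Świątkowski complex of a graph $\Gamma$ is $S(\Gamma)=\mathbb{Z}[E]\otimes\bigotimes_{v\in V}\mathbb{Z}\langle\varnothing,v,h\in H(v)\rangle$ ($H(v)$ the half-edges at $v$, $E$ the edges), bigraded by $|\varnothing|=(0,0)$, $|v|=|e|=(0,1)$, $|h|=(1,1)$ (homological degree, weight), with differential the $\mathbb{Z}[E]$-linear derivation (with Koszul signs, half-edge generators at different vertices anticommuting) determined by $\partial h=e(h)-v(h)$; factors $\varnothing$ are omitted from notation. The reduced complex $\widetilde S(\Gamma)$ replaces each factor by the submodule spanned by $\varnothing$ and the differences of half-edges at $v$; it is quasi-isomorphic to $S(\Gamma)$ when $\Gamma$ has no isolated vertices. The homology of $S(\Gamma)$ in degree $i$ and weight $k$ is naturally isomorphic to $H_i(B_k(\Gamma))$, where $B_k(\Gamma)$ is the unordered configuration space of $k$ points. *)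

theory Defs
  imports "HOL-Combinatorics.Permutations" "HOL-Library.Multiset"
begin

text \<open>Swiatkowski complex S(Theta_4) of the theta graph Theta_4: vertices v_1, v_2,
  edges e_1..e_4 (indexed by naturals 1..4), half-edge h_{i,j} at vertex v_i on edge e_j.

  As an abelian group, S(Theta_4) = Z[E] (x) F_1 (x) F_2 with F_i free on
  {emptyset, v_i, h_{i,1},...,h_{i,4}}. A Z-basis element is a triple (m, s1, s2):
  m is a monomial in Z[E] (a multiset of edge indices), s1 the generator from the
  vertex-v_1 factor, s2 the generator from the vertex-v_2 factor.\<close>

datatype vgen = Empty | Vert | Half nat

type_synonym sbasis = "nat multiset \<times> vgen \<times> vgen"
type_synonym schain = "sbasis \<Rightarrow> int"

definition valid_vgen :: "vgen \<Rightarrow> bool" where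
  "valid_vgen s = (case s of Half j \<Rightarrow> j \<in> {1..4} | _ \<Rightarrow> True)"

definition valid_basis :: "sbasis \<Rightarrow> bool" where
  "valid_basis b = (case b of (m, s1, s2) \<Rightarrow>
      set_mset m \<subseteq> {1..4} \<and> valid_vgen s1 \<and> valid_vgen s2)"

definition hdeg :: "vgen \<Rightarrow> nat" where
  "hdeg s = (case s of Half _ \<Rightarrow> 1 | _ \<Rightarrow> 0)"

definition wdeg :: "vgen \<Rightarrow> nat" where
  "wdeg s = (case s of Empty \<Rightarrow> 0 | _ \<Rightarrow> 1)"

definition bdeg :: "sbasis \<Rightarrow> nat" where
  "bdeg b = (case b of (m, s1, s2) \<Rightarrow> hdeg s1 + hdeg s2)"

definition bweight :: "sbasis \<Rightarrow> nat" where
  "bweight b = (case b of (m, s1, s2) \<Rightarrow> size m + wdeg s1 + wdeg s2)"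

definition supp :: "schain \<Rightarrow> sbasis set" where
  "supp c = {b. c b \<noteq> 0}"

definition chains :: "nat \<Rightarrow> nat \<Rightarrow> schain set" where
  "chains i k = {c. finite (supp c) \<and>
      (\<forall>b \<in> supp c. valid_basis b \<and> bdeg b = i \<and> bweight b = k)}"

definition basis_chain :: "sbasis \<Rightarrow> schain" where
  "basis_chain b = (\<lambda>x. if x = b then 1 else 0)"

text \<open>Differential of a basis element: Z[E]-linear derivation with Koszul signs,
  d(h_{i,j}) = e_j - v_i, d(v_i) = 0, d(e) = 0:
  d(e^m (x) s1 (x) s2) = e^m (d s1 (x) s2 + (-1)^{|s1|} s1 (x) d s2).\<close>
definition dbasis :: "sbasis \<Rightarrow> schain" where
  "dbasis b = (case b of (m, s1, s2) \<Rightarrow> (\<lambda>y.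
      (case s1 of Half j \<Rightarrow>
          basis_chain (m + {#j#}, Empty, s2) y - basis_chain (m, Vert, s2) y
        | _ \<Rightarrow> 0)
    + (case s2 of Half j \<Rightarrow>
          (-1) ^ hdeg s1 * (basis_chain (m + {#j#}, s1, Empty) y - basis_chain (m, s1, Vert) y)
        | _ \<Rightarrow> 0)))"

definition bd :: "schain \<Rightarrow> schain" where
  "bd c = (\<lambda>y. \<Sum>x \<in> supp c. c x * dbasis x y)"

definition tensor3 :: "(nat multiset \<Rightarrow> int) \<Rightarrow> (vgen \<Rightarrow> int) \<Rightarrow> (vgen \<Rightarrow> int) \<Rightarrow> schain" where
  "tensor3 p f g = (\<lambda>(m, s1, s2). p m * f s1 * g s2)"

definition edge :: "nat \<Rightarrow> nat multiset \<Rightarrow> int" where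
  "edge j = (\<lambda>m. if m = {#j#} then 1 else 0)"

definition half :: "nat \<Rightarrow> vgen \<Rightarrow> int" where
  "half j = (\<lambda>s. if s = Half j then 1 else 0)"

definition A2 :: schain where
  "A2 = (\<lambda>b. \<Sum>\<sigma> \<in> {\<sigma>. \<sigma> permutes {1..4::nat}}.
      of_int (sign \<sigma>) *
      tensor3 (\<lambda>m. edge 1 m - edge (\<sigma> 3) m)
              (\<lambda>s. half (\<sigma> 1) s - half 1 s)
              (\<lambda>s. half (\<sigma> 2) s - half 1 s) b)"

end

theory Submission
  imports Defs
begin

text \<open>A chain of degree 2 and weight 3 is a function z(e, a, c) on the basis elements
  e \<otimes> h_{1,a} \<otimes> h_{2,c}, and there are no nonzero chains of degree 3, so H_2(B_3(\<Theta>_4)) is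
  the group of cycles. Reading off the coefficients of d z at e e' \<otimes> h_{2,c}, v_1 \<otimes> h_{2,c},
  e e' \<otimes> h_{1,a} and h_{1,a} \<otimes> v_2 shows that z is a cycle iff z is antisymmetric under
  exchanging the edge index with either half-edge index and all its sums over one half-edge index
  vanish. Such a z is alternating, hence determined by its values at the four increasing triples,
  and the vanishing sums force these to be \<plusminus>z(1,2,3): z is z(1,2,3) times the Levi-Civita
  symbol. A direct computation over the 24 permutations shows that A_2 is minus that symbol.\<close>

definition cell_index :: "(nat \<times> nat \<times> nat) set" where
  "cell_index = {1..4} \<times> {1..4} \<times> {1..4}"

definition cells_2_3 :: "sbasis set" where
  "cells_2_3 = (\<lambda>(e, a, c). ({#e#}, Half a, Half c)) ` cell_index"

definition coeff :: "schain \<Rightarrow> nat \<Rightarrow> nat \<Rightarrow> nat \<Rightarrow> int" where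
  "coeff z e a c = z ({#e#}, Half a, Half c)"

lemma atLeastAtMost_1_4: "{1..4::nat} = {1, 2, 3, 4}"
  by auto

lemma finite_cells_2_3: "finite cells_2_3"
  unfolding cells_2_3_def cell_index_def by simp

lemma finite_cell_index: "finite cell_index"
  unfolding cell_index_def by simp

lemma cells_2_3_iff: "b \<in> cells_2_3 \<longleftrightarrow> valid_basis b \<and> bdeg b = 2 \<and> bweight b = 3"
proof
  assume b: "valid_basis b \<and> bdeg b = 2 \<and> bweight b = 3"
  obtain m s1 s2 where b_eq: "b = (m, s1, s2)"
    by (cases b)
  from b obtain a c where s: "s1 = Half a" "s2 = Half c"
    unfolding b_eq bdeg_def hdeg_def by (auto split: vgen.splits)
  from b have "size m = 1"
    unfolding b_eq s bweight_def wdeg_def by simp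
  then obtain e where "m = {#e#}"
    using size_1_singleton_mset by blast
  with b show "b \<in> cells_2_3"
    unfolding b_eq s cells_2_3_def cell_index_def
    by (auto simp: valid_basis_def valid_vgen_def image_iff)
qed (auto simp: cells_2_3_def cell_index_def valid_basis_def valid_vgen_def bdeg_def hdeg_def
      bweight_def wdeg_def)

lemma chains_2_3_eq: "chains 2 3 = {z. supp z \<subseteq> cells_2_3}"
  unfolding chains_def cells_2_3_iff[symmetric]
  using finite_cells_2_3 by (auto intro: finite_subset)

lemma sum_mult_basis_chain:
  assumes "finite A"
  shows "(\<Sum>x\<in>A. f x * basis_chain (g x) y) = (\<Sum>x\<in>{x \<in> A. g x = y}. f x)"
proof -
  have "(\<Sum>x\<in>A. f x * basis_chain (g x) y) = (\<Sum>x\<in>A. if g x = y then f x else 0)"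
    by (intro sum.cong) (auto simp: basis_chain_def)
  also have "\<dots> = (\<Sum>x\<in>{x \<in> A. g x = y}. f x)"
    using assms by (rule sum.inter_filter[symmetric])
  finally show ?thesis .
qed

lemma bd_chain_2_3:
  assumes "supp z \<subseteq> cells_2_3"
  shows "bd z y =
     (\<Sum>(e, a, c)\<in>{(e, a, c) \<in> cell_index. ({#a, e#}, Empty, Half c) = y}. coeff z e a c)
   - (\<Sum>(e, a, c)\<in>{(e, a, c) \<in> cell_index. ({#e#}, Vert, Half c) = y}. coeff z e a c)
   - (\<Sum>(e, a, c)\<in>{(e, a, c) \<in> cell_index. ({#c, e#}, Half a, Empty) = y}. coeff z e a c)
   + (\<Sum>(e, a, c)\<in>{(e, a, c) \<in> cell_index. ({#e#}, Half a, Vert) = y}. coeff z e a c)"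
proof -
  have "bd z y = (\<Sum>b\<in>cells_2_3. z b * dbasis b y)"
    unfolding bd_def using finite_cells_2_3 assms
    by (intro sum.mono_neutral_left) (auto simp: supp_def)
  also have "\<dots> = (\<Sum>(e, a, c)\<in>cell_index. coeff z e a c * dbasis ({#e#}, Half a, Half c) y)"
    unfolding cells_2_3_def coeff_def by (subst sum.reindex) (auto simp: inj_on_def split_def)
  also have "\<dots> =
       (\<Sum>(e, a, c)\<in>cell_index. coeff z e a c * basis_chain ({#a, e#}, Empty, Half c) y)
     - (\<Sum>(e, a, c)\<in>cell_index. coeff z e a c * basis_chain ({#e#}, Vert, Half c) y)
     - (\<Sum>(e, a, c)\<in>cell_index. coeff z e a c * basis_chain ({#c, e#}, Half a, Empty) y)
     + (\<Sum>(e, a, c)\<in>cell_index. coeff z e a c * basis_chain ({#e#}, Half a, Vert) y)"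
    by (simp add: dbasis_def hdeg_def split_def algebra_simps sum.distrib sum_subtractf)
  finally show ?thesis
    using finite_cell_index by (simp add: split_def sum_mult_basis_chain)
qed

lemma bd_at_v1_vertex:
  assumes "supp z \<subseteq> cells_2_3" "e \<in> {1..4}" "c \<in> {1..4}"
  shows "bd z ({#e#}, Vert, Half c) = - (\<Sum>a\<in>{1..4}. coeff z e a c)"
proof -
  have "{(e', a', c') \<in> cell_index. ({#e'#}, Vert, Half c') = ({#e#}, Vert, Half c)} =
        (\<lambda>a. (e, a, c)) ` {1..4}"
    using assms by (auto simp: cell_index_def)
  then show ?thesis
    using assms by (simp add: bd_chain_2_3 sum.reindex inj_on_def case_prod_unfold)
qed

lemma bd_at_v2_vertex:
  assumes "supp z \<subseteq> cells_2_3" "e \<in> {1..4}" "a \<in> {1..4}"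
  shows "bd z ({#e#}, Half a, Vert) = (\<Sum>c\<in>{1..4}. coeff z e a c)"
proof -
  have "{(e', a', c') \<in> cell_index. ({#e'#}, Half a', Vert) = ({#e#}, Half a, Vert)} =
        (\<lambda>c. (e, a, c)) ` {1..4}"
    using assms by (auto simp: cell_index_def)
  then show ?thesis
    using assms by (simp add: bd_chain_2_3 sum.reindex inj_on_def case_prod_unfold)
qed

lemma bd_at_v1_edge:
  assumes "supp z \<subseteq> cells_2_3" "e \<in> {1..4}" "a \<in> {1..4}" "c \<in> {1..4}"
  shows "bd z ({#a, e#}, Empty, Half c) =
           (if a = e then coeff z e e c else coeff z e a c + coeff z a e c)"
proof -
  have "{(e', a', c') \<in> cell_index. ({#a', e'#}, Empty, Half c') = ({#a, e#}, Empty, Half c)} =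
        {(e, a, c), (a, e, c)}"
    using assms by (auto simp: cell_index_def add_eq_conv_diff)
  then show ?thesis
    using assms by (simp add: bd_chain_2_3 case_prod_unfold sum.insert_if)
qed

lemma bd_at_v2_edge:
  assumes "supp z \<subseteq> cells_2_3" "e \<in> {1..4}" "a \<in> {1..4}" "c \<in> {1..4}"
  shows "bd z ({#c, e#}, Half a, Empty) =
           - (if c = e then coeff z e a e else coeff z e a c + coeff z c a e)"
proof -
  have "{(e', a', c') \<in> cell_index. ({#c', e'#}, Half a', Empty) = ({#c, e#}, Half a, Empty)} =
        {(e, a, c), (c, a, e)}"
    using assms by (auto simp: cell_index_def add_eq_conv_diff)
  then show ?thesis
    using assms by (simp add: bd_chain_2_3 case_prod_unfold sum.insert_if)
qed

definition cycle_coeffs :: "(nat \<Rightarrow> nat \<Rightarrow> nat \<Rightarrow> int) \<Rightarrow> bool" where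
  "cycle_coeffs f \<longleftrightarrow>
     (\<forall>e\<in>{1..4}. \<forall>a\<in>{1..4}. \<forall>c\<in>{1..4}. f a e c = - f e a c \<and> f c a e = - f e a c) \<and>
     (\<forall>e\<in>{1..4}. \<forall>c\<in>{1..4}. (\<Sum>a\<in>{1..4}. f e a c) = 0) \<and>
     (\<forall>e\<in>{1..4}. \<forall>a\<in>{1..4}. (\<Sum>c\<in>{1..4}. f e a c) = 0)"

lemma cycle_coeffs_if_bd_eq_0:
  assumes supp: "supp z \<subseteq> cells_2_3" and bd0: "bd z = (\<lambda>_. 0)"
  shows "cycle_coeffs (coeff z)"
proof -
  have "coeff z a e c = - coeff z e a c" "coeff z c a e = - coeff z e a c"
    if "e \<in> {1..4}" "a \<in> {1..4}" "c \<in> {1..4}" for e a c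
    using bd_at_v1_edge[OF supp that] bd_at_v2_edge[OF supp that] bd0
    by (auto split: if_splits)
  moreover have "(\<Sum>a\<in>{1..4}. coeff z e a c) = 0" if "e \<in> {1..4}" "c \<in> {1..4}" for e c
    using bd_at_v1_vertex[OF supp that] bd0 by simp
  moreover have "(\<Sum>c\<in>{1..4}. coeff z e a c) = 0" if "e \<in> {1..4}" "a \<in> {1..4}" for e a
    using bd_at_v2_vertex[OF supp that] bd0 by simp
  ultimately show ?thesis
    unfolding cycle_coeffs_def by blast
qed

lemma bd_off_faces:
  assumes "supp z \<subseteq> cells_2_3"
    and "\<And>e a c. (e, a, c) \<in> cell_index \<Longrightarrow>
           y \<notin> {({#a, e#}, Empty, Half c), ({#e#}, Vert, Half c),
                 ({#c, e#}, Half a, Empty), ({#e#}, Half a, Vert)}"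
  shows "bd z y = 0"
proof -
  have "(e, a, c) \<in> cell_index \<Longrightarrow>
      ({#a, e#}, Empty, Half c) \<noteq> y \<and> ({#e#}, Vert, Half c) \<noteq> y \<and>
      ({#c, e#}, Half a, Empty) \<noteq> y \<and> ({#e#}, Half a, Vert) \<noteq> y" for e a c
    using assms(2) by blast
  then show ?thesis
    by (simp add: bd_chain_2_3[OF assms(1)] cong: conj_cong)
qed

lemma bd_eq_0_if_cycle_coeffs:
  assumes supp: "supp z \<subseteq> cells_2_3" and "cycle_coeffs (coeff z)"
  shows "bd z = (\<lambda>_. 0)"
proof
  fix y
  have swap12: "coeff z a e c = - coeff z e a c"
    and swap13: "coeff z c a e = - coeff z e a c"
    and row_v1: "(\<Sum>a\<in>{1..4}. coeff z e a c) = 0"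
    and row_v2: "(\<Sum>c\<in>{1..4}. coeff z e a c) = 0"
    if "e \<in> {1..4}" "a \<in> {1..4}" "c \<in> {1..4}" for e a c
    using assms(2) that unfolding cycle_coeffs_def by blast+
  show "bd z y = 0"
  proof (cases "\<exists>(e, a, c)\<in>cell_index.
                  y \<in> {({#a, e#}, Empty, Half c), ({#e#}, Vert, Half c),
                        ({#c, e#}, Half a, Empty), ({#e#}, Half a, Vert)}")
    case True
    then obtain e a c where idx: "e \<in> {1..4}" "a \<in> {1..4}" "c \<in> {1..4}"
      and "y \<in> {({#a, e#}, Empty, Half c), ({#e#}, Vert, Half c),
                ({#c, e#}, Half a, Empty), ({#e#}, Half a, Vert)}"
      by (auto simp: cell_index_def)
    then consider "y = ({#a, e#}, Empty, Half c)" | "y = ({#e#}, Vert, Half c)"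
      | "y = ({#c, e#}, Half a, Empty)" | "y = ({#e#}, Half a, Vert)"
      by blast
    then show ?thesis
    proof cases
      case 1
      then show ?thesis
        using bd_at_v1_edge[OF supp idx] swap12[OF idx] by auto
    next
      case 2
      then show ?thesis
        using bd_at_v1_vertex[OF supp idx(1,3)] row_v1[OF idx] by simp
    next
      case 3
      then show ?thesis
        using bd_at_v2_edge[OF supp idx] swap13[OF idx] by auto
    next
      case 4
      then show ?thesis
        using bd_at_v2_vertex[OF supp idx(1,2)] row_v2[OF idx] by simp
    qed
  next
    case False
    then show ?thesis
      using bd_off_faces[OF supp] by blast
  qed
qed

text \<open>For distinct e, a, c in {1..4} and k = 10 - e - a - c the missing index, this is the sign
  of the permutation (e, a, c, k) written as a product of pairwise comparisons; it is 0 otherwise.\<close>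
definition epsilon :: "nat \<Rightarrow> nat \<Rightarrow> nat \<Rightarrow> int" where
  "epsilon e a c = (let k = 10 - int e - int a - int c in
     sgn (int a - int e) * sgn (int c - int e) * sgn (k - int e) *
     sgn (int c - int a) * sgn (k - int a) * sgn (k - int c))"

lemma cycle_coeffs_eq_epsilon:
  assumes f: "cycle_coeffs f" and idx: "e \<in> {1..4}" "a \<in> {1..4}" "c \<in> {1..4}"
  shows "f e a c = f 1 2 3 * epsilon e a c"
proof -
  have swap12: "f a e c = - f e a c" and swap13: "f c a e = - f e a c"
    if "e \<in> {1..4}" "a \<in> {1..4}" "c \<in> {1..4}" for e a c
    using f that unfolding cycle_coeffs_def by blast+
  have swap23: "f e c a = - f e a c" if "e \<in> {1..4}" "a \<in> {1..4}" "c \<in> {1..4}" for e a c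
    using swap13[of e c a] swap12[of a c e] swap13[of c a e] that by simp
  \<comment> \<open>Oriented antisymmetries: used as simp rules, they sort every index triple.\<close>
  have sort12: "f e a c = - f a e c" if "a < e" "e \<in> {1..4}" "a \<in> {1..4}" "c \<in> {1..4}" for e a c
    using swap12[of a e c] that by simp
  have sort23: "f e a c = - f e c a" if "c < a" "e \<in> {1..4}" "a \<in> {1..4}" "c \<in> {1..4}" for e a c
    using swap23[of e c a] that by simp
  have diag12: "f e e c = 0" if "e \<in> {1..4}" "c \<in> {1..4}" for e c
    using swap12[of e e c] that by simp
  have diag23: "f e a a = 0" if "e \<in> {1..4}" "a \<in> {1..4}" for e a
    using swap23[of e a a] that by simp
  have row: "f e 1 c + f e 2 c + f e 3 c + f e 4 c = 0" if "e \<in> {1..4}" "c \<in> {1..4}" for e c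
  proof -
    have "(\<Sum>a\<in>{1..4}. f e a c) = 0"
      using f that unfolding cycle_coeffs_def by blast
    then show ?thesis
      unfolding atLeastAtMost_1_4 by (simp add: add.assoc)
  qed
  have sorted: "f 1 2 4 = - f 1 2 3" "f 1 3 4 = f 1 2 3" "f 2 3 4 = - f 1 2 3"
    using row[of 1 2] row[of 1 3] row[of 2 3] by (simp_all add: sort12 sort23 diag12 diag23)
  from idx show ?thesis
    unfolding atLeastAtMost_1_4
    by (auto simp: sort12 sort23 diag12 diag23 sorted[unfolded One_nat_def] epsilon_def)
qed

lemma sum_permutes_1_4:
  "(\<Sum>\<sigma> | \<sigma> permutes {1..4::nat}. f \<sigma>) =
     (\<Sum>b1\<in>{1, 2, 3, 4}. \<Sum>b2\<in>{2, 3, 4}. \<Sum>b3\<in>{3, 4}.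
        f (transpose 1 b1 \<circ> (transpose 2 b2 \<circ> transpose 3 b3)))"
proof -
  have "{1..4::nat} = insert 1 (insert 2 (insert 3 (insert 4 {})))"
    by auto
  moreover have "{p. p permutes ({}::nat set)} = {id}"
    by auto
  ultimately show ?thesis
    by (simp add: sum_over_permutations_insert)
qed

lemma sign_transpose_comp:
  "permutation p \<Longrightarrow> sign (transpose a b \<circ> p) = (if a = b then sign p else - sign p)"
  by (simp add: sign_compose permutation_swap_id sign_swap_id)

lemma coeff_A2:
  assumes "e \<in> {1..4}" "a \<in> {1..4}" "c \<in> {1..4}"
  shows "coeff A2 e a c = - epsilon e a c"
  using assms[unfolded atLeastAtMost_1_4] unfolding coeff_def A2_def sum_permutes_1_4
  by (elim insertE emptyE; simp add: tensor3_def edge_def half_def epsilon_def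
      sign_transpose_comp permutation_swap_id permutation_compose sign_swap_id transpose_def)

lemma cycle_coeffs_A2: "cycle_coeffs (coeff A2)"
  unfolding cycle_coeffs_def atLeastAtMost_1_4 by (simp add: coeff_A2 epsilon_def)

lemma A2_outside_cells_2_3:
  assumes "b \<notin> cells_2_3"
  shows "A2 b = 0"
proof -
  have "tensor3 (\<lambda>m. edge 1 m - edge (\<sigma> 3) m) (\<lambda>s. half (\<sigma> 1) s - half 1 s)
          (\<lambda>s. half (\<sigma> 2) s - half 1 s) b = 0" if \<sigma>: "\<sigma> permutes {1..4}" for \<sigma>
  proof -
    have "\<sigma> 1 \<in> {1..4}" "\<sigma> 2 \<in> {1..4}" "\<sigma> 3 \<in> {1..4}"
      using permutes_in_image[OF \<sigma>] by auto
    with assms show ?thesis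
      unfolding cells_2_3_def cell_index_def
      by (cases b) (auto simp: tensor3_def edge_def half_def image_iff)
  qed
  then show ?thesis
    unfolding A2_def by simp
qed

lemma supp_A2: "supp A2 \<subseteq> cells_2_3"
  using A2_outside_cells_2_3 unfolding supp_def by blast

lemma cycle_eq_multiple_of_A2:
  assumes z: "z \<in> chains 2 3" and bd0: "bd z = (\<lambda>_. 0)"
  shows "z = (\<lambda>b. - coeff z 1 2 3 * A2 b)"
proof
  fix b
  have supp: "supp z \<subseteq> cells_2_3"
    using z by (simp add: chains_2_3_eq)
  show "z b = - coeff z 1 2 3 * A2 b"
  proof (cases "b \<in> cells_2_3")
    case True
    then obtain e a c where b: "b = ({#e#}, Half a, Half c)"
      and idx: "e \<in> {1..4}" "a \<in> {1..4}" "c \<in> {1..4}"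
      by (auto simp: cells_2_3_def cell_index_def)
    have "coeff z e a c = coeff z 1 2 3 * epsilon e a c"
      using cycle_coeffs_eq_epsilon[OF cycle_coeffs_if_bd_eq_0[OF supp bd0] idx] .
    then show ?thesis
      using coeff_A2[OF idx] unfolding b coeff_def by simp
  next
    case False
    then have "z b = 0"
      using supp unfolding supp_def by blast
    with False show ?thesis
      by (simp add: A2_outside_cells_2_3)
  qed
qed

theorem mainTheorem4:
  shows "A2 \<in> chains 2 3 \<and> bd A2 = (\<lambda>_. 0) \<and>
    (\<forall>z \<in> chains 2 3. bd z = (\<lambda>_. 0) \<longrightarrow>
       (\<exists>n::int. \<exists>d \<in> chains 3 3. (\<lambda>b. z b - n * A2 b) = bd d))"
proof (intro conjI ballI impI)
  show "A2 \<in> chains 2 3"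
    using supp_A2 by (simp add: chains_2_3_eq)
  show "bd A2 = (\<lambda>_. 0)"
    using supp_A2 cycle_coeffs_A2 by (rule bd_eq_0_if_cycle_coeffs)
  fix z
  assume "z \<in> chains 2 3" "bd z = (\<lambda>_. 0)"
  then have "(\<lambda>b. z b - (- coeff z 1 2 3) * A2 b) = bd (\<lambda>_. 0)"
    by (subst cycle_eq_multiple_of_A2) (auto simp: bd_def supp_def)
  moreover have "(\<lambda>_. 0) \<in> chains 3 3"
    by (simp add: chains_def supp_def)
  ultimately show "\<exists>n::int. \<exists>d \<in> chains 3 3. (\<lambda>b. z b - n * A2 b) = bd d"
    by blast
qed

end
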